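(* Let $k\ge 2$ and let $\mathcal H$ be a 3-uniform linear hypergraph containing no Berge cycle of length $2k+1$. Let $\pi$ be a choice function on $\mathcal H$ and let $G_\pi$ be the graph with edge set $\{\pi(E): E\in\mathcal H,\ \pi(E)\ne\emptyset\}$. Let $T$ be a subtree (not necessarily spanning) of $G_\pi$, let $x\in V(T)$, and for $i\ge 0$ let $V_i$ be the set of vertices of $T$ at distance exactly $i$ from $x$ in $T$. Then for every $1\le i\le k$, the induced subgraph $G_\pi[V_i]$ contains no $\Theta$-graph of order $\ell$ for any $\ell\ge 2k$.
   Context: A hypergraph is linear if any two distinct hyperedges share at most one vertex. A Berge cycle of length $m$ is a family of $m$ distinct hyperedges $H_0,\dots,H_{m-1}$ for which there exist distinct vertices $v_0,\dots,v_{m-1}$ with $\{v_i,v_{i+1}\}\subset H_i$ (indices mod $m$). A choice function on $\mathcal H$ is a map $\pi$ assigning to each hyperedge $E$ either a 2-element subset $\pi(E)\subset E$ or $\emptyset$. A $\Theta$-graph of order $\ell$ ($\ell\ge4$) is a cycle of length $\ell$ together with one chord, on exactly $\ell$ vertices. *)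

theory Defs
  imports Main
begin

definition linear_hg :: "'a set set \<Rightarrow> bool" where
  "linear_hg H \<longleftrightarrow> (\<forall>E\<in>H. \<forall>F\<in>H. E \<noteq> F \<longrightarrow> card (E \<inter> F) \<le> 1)"

definition uniform3 :: "'a set set \<Rightarrow> bool" where
  "uniform3 H \<longleftrightarrow> (\<forall>E\<in>H. card E = 3)"

definition has_berge_cycle :: "'a set set \<Rightarrow> nat \<Rightarrow> bool" where
  "has_berge_cycle H m \<longleftrightarrow>
     (\<exists>Hs :: nat \<Rightarrow> 'a set. \<exists>v :: nat \<Rightarrow> 'a.
        inj_on Hs {..<m} \<and> Hs ` {..<m} \<subseteq> H \<and> inj_on v {..<m} \<and>
        (\<forall>i<m. {v i, v (Suc i mod m)} \<subseteq> Hs i))"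

definition choice_fun :: "'a set set \<Rightarrow> ('a set \<Rightarrow> 'a set) \<Rightarrow> bool" where
  "choice_fun H \<pi> \<longleftrightarrow> (\<forall>E\<in>H. (\<pi> E \<subseteq> E \<and> card (\<pi> E) = 2) \<or> \<pi> E = {})"

definition G_pi :: "'a set set \<Rightarrow> ('a set \<Rightarrow> 'a set) \<Rightarrow> 'a set set" where
  "G_pi H \<pi> = {\<pi> E | E. E \<in> H \<and> \<pi> E \<noteq> {}}"

definition is_walk :: "'a set set \<Rightarrow> 'a list \<Rightarrow> bool" where
  "is_walk Ed xs \<longleftrightarrow> xs \<noteq> [] \<and> (\<forall>j. Suc j < length xs \<longrightarrow> {xs ! j, xs ! Suc j} \<in> Ed)"

definition graph_connected :: "'a set \<Rightarrow> 'a set set \<Rightarrow> bool" where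
  "graph_connected V Ed \<longleftrightarrow>
     (\<forall>u\<in>V. \<forall>w\<in>V. \<exists>xs. is_walk Ed xs \<and> hd xs = u \<and> last xs = w)"

definition has_cycle :: "'a set set \<Rightarrow> bool" where
  "has_cycle Ed \<longleftrightarrow> (\<exists>m\<ge>3. \<exists>f :: nat \<Rightarrow> 'a.
      inj_on f {..<m} \<and> (\<forall>j<m. {f j, f (Suc j mod m)} \<in> Ed))"

definition is_subtree :: "'a set \<Rightarrow> 'a set set \<Rightarrow> 'a set \<Rightarrow> 'a set set \<Rightarrow> bool" where
  "is_subtree VT ET VG EG \<longleftrightarrow>
     VT \<noteq> {} \<and> finite VT \<and> VT \<subseteq> VG \<and> ET \<subseteq> EG \<and>
     (\<forall>e\<in>ET. \<exists>u v. e = {u, v} \<and> u \<noteq> v \<and> u \<in> VT \<and> v \<in> VT) \<and>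
     graph_connected VT ET \<and> \<not> has_cycle ET"

definition tree_dist :: "'a set set \<Rightarrow> 'a \<Rightarrow> 'a \<Rightarrow> nat" where
  "tree_dist ET x v = (LEAST n. \<exists>xs. is_walk ET xs \<and> hd xs = x \<and> last xs = v \<and> length xs = Suc n)"

text \<open>Theta-graph of order l (as a subgraph, not necessarily induced) of the graph with
  vertex set S and edges Ed \<inter> Pow S: a cycle on l distinct vertices of S plus one chord.\<close>
definition has_theta :: "'a set \<Rightarrow> 'a set set \<Rightarrow> nat \<Rightarrow> bool" where
  "has_theta S Ed l \<longleftrightarrow> 4 \<le> l \<and> (\<exists>f :: nat \<Rightarrow> 'a. \<exists>a b.
      inj_on f {..<l} \<and> f ` {..<l} \<subseteq> S \<and>
      (\<forall>j<l. {f j, f (Suc j mod l)} \<in> Ed) \<and>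
      a < l \<and> b < l \<and> a \<noteq> b \<and> b \<noteq> Suc a mod l \<and> a \<noteq> Suc b mod l \<and>
      {f a, f b} \<in> Ed)"

definition induced_edges :: "'a set set \<Rightarrow> 'a set \<Rightarrow> 'a set set" where
  "induced_edges Ed S = {e \<in> Ed. e \<subseteq> S}"

end

theory Submission
  imports Defs
begin

text \<open>Suppose the level V_i (i \<le> k) of the tree contains a theta graph of order l \<ge> 2k. Let j < i
  be the deepest level at which all its vertices still have a common ancestor, and 2-colour the
  theta graph by whether a vertex has a prescribed ancestor at level j + 1; this colouring is not
  constant. In a theta graph of order l, every non-constant 2-colouring admits, for each odd L < l,
  a path with L edges whose ends have different colours: otherwise, unrolling the cycle to the
  integers, the paths along the cycle make the colouring L-periodic, and the paths through the
  chord force translations or reflections whose composition is a period 2, so the colouring has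
  period gcd(2, L) = 1. Taking L = 2(k - i + j) + 1 and closing such a path through the two tree
  paths down to the common ancestor gives a cycle of length 2k + 1 in G_pi, and as distinct
  edges of G_pi come from distinct hyperedges, this is a Berge cycle of length 2k + 1.\<close>

section \<open>Periodic colourings of the integers\<close>

definition is_period :: "(int \<Rightarrow> 'b) \<Rightarrow> int \<Rightarrow> bool" where
  "is_period col d \<longleftrightarrow> (\<forall>z. col (z + d) = col z)"

lemma is_periodD: "is_period col d \<Longrightarrow> col (z + d) = col z"
  unfolding is_period_def by blast

lemma is_period_uminus: "is_period col d \<Longrightarrow> is_period col (- d)"
  unfolding is_period_def by (metis diff_add_cancel uminus_add_conv_diff add.commute)

lemma is_period_add: "is_period col d \<Longrightarrow> is_period col e \<Longrightarrow> is_period col (d + e)"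
  unfolding is_period_def by (metis add.assoc)

lemma is_period_diff: "is_period col d \<Longrightarrow> is_period col e \<Longrightarrow> is_period col (d - e)"
  using is_period_add is_period_uminus by fastforce

lemma is_period_mult_nat: "is_period col d \<Longrightarrow> is_period col (int n * d)"
proof (induction n)
  case 0
  then show ?case by (simp add: is_period_def)
next
  case (Suc n)
  then have "is_period col (int n * d + d)" using is_period_add by blast
  then show ?case by (simp add: algebra_simps)
qed

lemma is_period_mult: "is_period col d \<Longrightarrow> is_period col (n * d)"
  using is_period_mult_nat[of col d "nat n"] is_period_uminus[OF is_period_mult_nat[of col d "nat (- n)"]]
  by (cases "n \<ge> 0") auto

lemma is_period_mod:
  assumes "is_period col P"
  shows "col (lo + (y - lo) mod P) = col y"
proof -
  have "y = (lo + (y - lo) mod P) + ((y - lo) div P) * P"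
    by (metis add.commute add.left_commute diff_add_cancel mod_div_mult_eq)
  then show ?thesis using is_periodD[OF is_period_mult[OF assms]] by metis
qed

lemma reflection_from_window:
  assumes "is_period col P" "P > 0"
    and "\<And>y. lo \<le> y \<Longrightarrow> y < lo + P \<Longrightarrow> col y = col (\<sigma> - y)"
  shows "col y = col (\<sigma> - y)"
proof -
  define y' where "y' = lo + (y - lo) mod P"
  have "lo \<le> y'" "y' < lo + P" unfolding y'_def using assms(2) by auto
  then have "col y' = col (\<sigma> - y')" using assms(3) by blast
  moreover have "\<sigma> - y' = (\<sigma> - y) + ((y - lo) div P) * P"
    unfolding y'_def by (simp add: algebra_simps)
  ultimately show ?thesis
    using is_period_mod[OF assms(1), of lo y] is_periodD[OF is_period_mult[OF assms(1)]] y'_def by metis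
qed

lemma is_period_from_window:
  assumes "is_period col P" "P > 0"
    and "\<And>y. lo \<le> y \<Longrightarrow> y < lo + P \<Longrightarrow> col y = col (y + \<delta>)"
  shows "is_period col \<delta>"
  unfolding is_period_def
proof
  fix y
  define y' where "y' = lo + (y - lo) mod P"
  have "lo \<le> y'" "y' < lo + P" unfolding y'_def using assms(2) by auto
  then have "col y' = col (y' + \<delta>)" using assms(3) by blast
  moreover have "col (y' + \<delta>) = col (y + \<delta>)"
    using is_period_mod[OF assms(1), of "lo + \<delta>" "y + \<delta>"] unfolding y'_def by (simp add: add_ac)
  ultimately show "col (y + \<delta>) = col y"
    using is_period_mod[OF assms(1), of lo y] y'_def by simp
qed

lemma is_period_of_two_reflections:
  "(\<And>y. col y = col (\<sigma> - y)) \<Longrightarrow> (\<And>y. col y = col (\<sigma>' - y)) \<Longrightarrow> is_period col (\<sigma>' - \<sigma>)"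
  unfolding is_period_def by (metis add_diff_cancel_left' diff_diff_eq2 diff_add_cancel)

lemma constant_if_period_two_and_odd:
  assumes "is_period col 2" "is_period col L" "odd L"
  shows "col z = col w"
proof -
  obtain m where "L = 2 * m + 1" using assms(3) by (metis oddE)
  then have "is_period col 1"
    using is_period_diff[OF assms(2) is_period_mult[OF assms(1), of m]] by simp
  then show ?thesis using is_period_mod[of col 1 0] by (metis mod_by_1)
qed

text \<open>The colouring of a theta graph, unrolled along its cycle of length l to a colouring of the
  integers, with the chord joining 0 and t. Each hypothesis says that a path with L edges that
  runs from p (or -p) back to 0, crosses the chord and continues q = L - 1 - p steps forwards or
  backwards from t without revisiting a vertex has equally coloured ends.\<close>

locale chord_colouring =
  fixes col :: "int \<Rightarrow> 'b" and l L t :: int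
  assumes period_l: "is_period col l" and period_L: "is_period col L"
    and L_pos: "1 \<le> L" and L_less: "L \<le> l - 1"
    and t_bounds: "2 \<le> t" "t \<le> l - 2"
    and back_then_forward:
      "\<And>p. 0 \<le> p \<Longrightarrow> p \<le> t - 1 \<Longrightarrow> 0 \<le> L - 1 - p \<Longrightarrow> L - 1 - p \<le> l - t - 1 \<Longrightarrow>
         col p = col (t + (L - 1 - p))"
    and forward_then_back:
      "\<And>p. 0 \<le> p \<Longrightarrow> p \<le> l - t - 1 \<Longrightarrow> 0 \<le> L - 1 - p \<Longrightarrow> L - 1 - p \<le> t - 1 \<Longrightarrow>
         col (- p) = col (t - (L - 1 - p))"
    and back_then_back:
      "\<And>p. L \<le> t \<Longrightarrow> 0 \<le> p \<Longrightarrow> p \<le> L - 1 \<Longrightarrow> col p = col (t - (L - 1 - p))"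
    and forward_then_forward:
      "\<And>p. L \<le> l - t \<Longrightarrow> 0 \<le> p \<Longrightarrow> p \<le> L - 1 \<Longrightarrow> col (- p) = col (t + (L - 1 - p))"
begin

lemma shift_L: "col (y - L) = col y"
  using is_periodD[OF period_L, of "y - L"] by simp

lemma period_t_plus_1:
  assumes "L \<le> t"
  shows "is_period col (t + 1)"
proof (rule is_period_from_window[OF period_L])
  show "L > 0" using L_pos by simp
  fix y assume "0 \<le> y" "y < 0 + L"
  then have "col y = col (t - (L - 1 - y))" using back_then_back[OF assms] by simp
  also have "\<dots> = col (y + (t + 1))" using shift_L[of "y + (t + 1)"] by (simp add: algebra_simps)
  finally show "col y = col (y + (t + 1))" .
qed

lemma period_t_minus_1:
  assumes "L \<le> l - t"
  shows "is_period col (t - 1)"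
proof (rule is_period_from_window[OF period_L])
  show "L > 0" using L_pos by simp
  fix y assume "- (L - 1) \<le> y" "y < - (L - 1) + L"
  then have "col (- (- y)) = col (t + (L - 1 - (- y)))"
    using forward_then_forward[OF assms, of "- y"] by simp
  also have "\<dots> = col (y + (t - 1))" using shift_L[of "t + (L - 1 + y)"] by (simp add: algebra_simps)
  finally show "col y = col (y + (t - 1))" by simp
qed

lemma period_two_if_both_arcs_long:
  assumes "L \<le> t" "L \<le> l - t"
  shows "is_period col 2"
  using is_period_diff[OF period_t_plus_1[OF assms(1)] period_t_minus_1[OF assms(2)]] by simp

lemma period_two_if_second_arc_long:
  assumes "t < L" "L \<le> l - t"
  shows "is_period col 2"
proof -
  have period: "is_period col (t - 1)" and "t - 1 > 0"
    using period_t_minus_1[OF assms(2)] t_bounds by auto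
  have reflect_pred: "col y = col ((t - 1) - y)" for y
  proof (rule reflection_from_window[OF period \<open>t - 1 > 0\<close>])
    fix y assume "0 \<le> y" "y < 0 + (t - 1)"
    then have "col y = col (t + (L - 1 - y))" using back_then_forward assms by simp
    also have "\<dots> = col ((t - 1) - y)" using shift_L[of "t + (L - 1 - y)"] by (simp add: algebra_simps)
    finally show "col y = col ((t - 1) - y)" .
  qed
  have reflect_succ: "col y = col ((t + 1) - y)" for y
  proof (rule reflection_from_window[OF period \<open>t - 1 > 0\<close>])
    fix y assume "1 \<le> y" "y < 1 + (t - 1)"
    then have "col (- (L - y)) = col (t - (L - 1 - (L - y)))"
      using forward_then_back[of "L - y"] assms by simp
    then show "col y = col ((t + 1) - y)" using shift_L[of y] by (simp add: algebra_simps)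
  qed
  show ?thesis using is_period_of_two_reflections[of col, OF reflect_pred reflect_succ] by simp
qed

lemma period_two_if_first_arc_long:
  assumes "L \<le> t" "l - t < L"
  shows "is_period col 2"
proof -
  have period_succ: "is_period col (t + 1)" using period_t_plus_1[OF assms(1)] .
  have period: "is_period col (l - t - 1)" and "l - t - 1 > 0"
    using is_period_diff[OF period_l period_succ] t_bounds by (auto simp: algebra_simps)
  have reflect_pred: "col y = col (- 2 - y)" for y
  proof (rule reflection_from_window[OF period \<open>l - t - 1 > 0\<close>])
    fix y assume "- 1 \<le> y" "y < - 1 + (l - t - 1)"
    then have "col (L - 1 - (y + 1)) = col (t + (L - 1 - (L - 1 - (y + 1))))"
      using back_then_forward[of "L - 1 - (y + 1)"] assms by simp
    moreover have "col (L - 1 - (y + 1)) = col (- 2 - y)"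
      using is_periodD[OF period_L, of "- 2 - y"] by (simp add: algebra_simps)
    moreover have "col (t + (L - 1 - (L - 1 - (y + 1)))) = col y"
      using is_periodD[OF period_succ, of y] by (simp add: algebra_simps)
    ultimately show "col y = col (- 2 - y)" by simp
  qed
  have reflect_succ: "col y = col (0 - y)" for y
  proof (rule reflection_from_window[OF period \<open>l - t - 1 > 0\<close>])
    fix y assume "0 \<le> y" "y < 0 + (l - t - 1)"
    then have "col (- y) = col (t - (L - 1 - y))" using forward_then_back[of y] assms by simp
    moreover have "col (t - (L - 1 - y)) = col y"
      using shift_L[of "y + (t + 1)"] is_periodD[OF period_succ, of y] by (simp add: algebra_simps)
    ultimately show "col y = col (0 - y)" by simp
  qed
  show ?thesis using is_period_of_two_reflections[of col, OF reflect_pred reflect_succ] by simp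
qed

lemma period_two_if_both_arcs_short:
  assumes "t < L" "l - t < L"
  shows "is_period col 2"
proof -
  have period: "is_period col (l - L)" and "l - L > 0"
    using is_period_diff[OF period_l period_L] L_less by auto
  have reflect_pred: "col y = col ((t - 1) - y)" for y
  proof (rule reflection_from_window[OF period \<open>l - L > 0\<close>])
    fix y assume "L - (l - t) \<le> y" "y < L - (l - t) + (l - L)"
    then have "col y = col (t + (L - 1 - y))" using back_then_forward assms by simp
    also have "\<dots> = col ((t - 1) - y)" using shift_L[of "t + (L - 1 - y)"] by (simp add: algebra_simps)
    finally show "col y = col ((t - 1) - y)" .
  qed
  have reflect_succ: "col y = col ((t + 1) - y)" for y
  proof (rule reflection_from_window[OF period \<open>l - L > 0\<close>])
    fix y assume "L - (l - t) + 1 \<le> y" "y < L - (l - t) + 1 + (l - L)"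
    then have "col (- (L - y)) = col (t - (L - 1 - (L - y)))"
      using forward_then_back[of "L - y"] assms by simp
    then show "col y = col ((t + 1) - y)" using shift_L[of y] by (simp add: algebra_simps)
  qed
  show ?thesis using is_period_of_two_reflections[of col, OF reflect_pred reflect_succ] by simp
qed

lemma period_two: "is_period col 2"
  using period_two_if_both_arcs_long period_two_if_second_arc_long
    period_two_if_first_arc_long period_two_if_both_arcs_short
  by (cases "L \<le> t"; cases "L \<le> l - t") auto

end

section \<open>Odd paths with differently coloured ends in a theta graph\<close>

locale theta_graph =
  fixes Ed :: "'a set set" and l :: nat and f :: "nat \<Rightarrow> 'a" and a b :: nat
  assumes order: "4 \<le> l" and inj_f: "inj_on f {..<l}"
    and cycle_edge: "\<And>j. j < l \<Longrightarrow> {f j, f (Suc j mod l)} \<in> Ed"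
    and chord_ends: "a < l" "b < l" "a \<noteq> b" "b \<noteq> Suc a mod l" "a \<noteq> Suc b mod l"
    and chord_edge: "{f a, f b} \<in> Ed"
begin

definition unroll :: "int \<Rightarrow> 'a" where
  "unroll z = f (nat ((int a + z) mod int l))"

definition chord_offset :: int where
  "chord_offset = (int b - int a) mod int l"

lemma l_pos: "int l > 0"
  using order by simp

lemma unroll_in_range: "unroll z \<in> f ` {..<l}"
proof -
  have "nat ((int a + z) mod int l) < l" using l_pos by (simp add: nat_less_iff)
  then show ?thesis unfolding unroll_def by blast
qed

lemma unroll_eq_iff: "unroll z = unroll w \<longleftrightarrow> z mod int l = w mod int l"
proof
  have range: "nat ((int a + z) mod int l) < l" "nat ((int a + w) mod int l) < l"
    using l_pos by (simp_all add: nat_less_iff)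
  assume "unroll z = unroll w"
  then have "nat ((int a + z) mod int l) = nat ((int a + w) mod int l)"
    using inj_f range unfolding unroll_def inj_on_def by blast
  then have "(int a + z) mod int l = (int a + w) mod int l" using l_pos by (simp add: eq_nat_nat_iff)
  then show "z mod int l = w mod int l" by (simp add: mod_eq_dvd_iff)
next
  assume "z mod int l = w mod int l"
  then have "(int a + z) mod int l = (int a + w) mod int l" by (metis mod_add_right_eq)
  then show "unroll z = unroll w" unfolding unroll_def by simp
qed

lemma unroll_of_nat: "unroll (int j - int a) = f (j mod l)"
proof -
  have "int a + (int j - int a) = int j" by simp
  then show ?thesis unfolding unroll_def by (metis nat_int zmod_int)
qed

lemma unroll_0: "unroll 0 = f a"
  using unroll_of_nat[of a] chord_ends by simp

lemma unroll_chord_offset: "unroll chord_offset = f b"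
proof -
  have "unroll chord_offset = unroll (int b - int a)"
    unfolding chord_offset_def unroll_eq_iff by simp
  then show ?thesis using unroll_of_nat[of b] chord_ends by simp
qed

lemma unroll_edge: "{unroll z, unroll (z + 1)} \<in> Ed"
proof -
  define j where "j = nat ((int a + z) mod int l)"
  have "j < l" using l_pos unfolding j_def by (simp add: nat_less_iff)
  have "(int j - int a) mod int l = z mod int l"
    using l_pos unfolding j_def by (simp add: mod_diff_left_eq)
  then have "(int (Suc j) - int a) mod int l = (z + 1) mod int l"
    by (metis add.commute add_diff_eq mod_add_right_eq of_nat_Suc)
  then have "unroll (z + 1) = f (Suc j mod l)"
    using unroll_eq_iff unroll_of_nat by metis
  moreover have "unroll z = unroll (int j - int a)"
    unfolding unroll_eq_iff using \<open>(int j - int a) mod int l = z mod int l\<close> by simp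
  ultimately have "unroll z = f j" "unroll (z + 1) = f (Suc j mod l)"
    using unroll_of_nat[of j] \<open>j < l\<close> by simp_all
  then show ?thesis using cycle_edge \<open>j < l\<close> by simp
qed

lemma chord_offset_bounds: "2 \<le> chord_offset" "chord_offset \<le> int l - 2"
proof -
  have f_eq: "i = j" if "f i = f j" "i < l" "j < l" for i j
    using inj_f that by (simp add: inj_on_eq_iff)
  have range: "0 \<le> chord_offset" "chord_offset < int l"
    unfolding chord_offset_def using l_pos by simp_all
  have "chord_offset \<noteq> 0"
  proof
    assume "chord_offset = 0"
    then have "unroll (int b - int a) = unroll (int a - int a)"
      using unroll_eq_iff unfolding chord_offset_def by simp
    then show False using unroll_of_nat[of b] unroll_of_nat[of a] f_eq chord_ends by simp
  qed
  moreover have "chord_offset \<noteq> 1"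
  proof
    assume "chord_offset = 1"
    then have "unroll (int b - int a) = unroll (int (Suc a) - int a)"
      using unroll_eq_iff order unfolding chord_offset_def by simp
    then show False using unroll_of_nat[of b] unroll_of_nat[of "Suc a"] f_eq chord_ends by simp
  qed
  moreover have "chord_offset \<noteq> int l - 1"
  proof
    assume "chord_offset = int l - 1"
    have "(int (Suc b) - int a) mod int l = ((int b - int a) mod int l + 1) mod int l"
      by (metis add.commute add_diff_eq mod_add_right_eq of_nat_Suc)
    also have "\<dots> = (int a - int a) mod int l"
      using \<open>chord_offset = int l - 1\<close> unfolding chord_offset_def by simp
    finally have "unroll (int (Suc b) - int a) = unroll (int a - int a)" using unroll_eq_iff by blast
    then have "f (Suc b mod l) = f a" using unroll_of_nat[of "Suc b"] unroll_of_nat[of a] chord_ends by simp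
    then show False using f_eq chord_ends l_pos by simp
  qed
  ultimately show "2 \<le> chord_offset" "chord_offset \<le> int l - 2" using range by auto
qed

lemma is_period_unroll: "is_period (c \<circ> unroll) (int l)"
proof -
  have "unroll (z + int l) = unroll z" for z unfolding unroll_eq_iff by simp
  then show ?thesis unfolding is_period_def by simp
qed

lemma inj_on_unroll_path:
  fixes h :: "nat \<Rightarrow> int"
  assumes "\<And>j j'. j < j' \<Longrightarrow> j' \<le> n \<Longrightarrow> \<not> int l dvd h j' - h j"
  shows "inj_on (unroll \<circ> h) {..n}"
proof (rule inj_onI)
  fix j j' assume "j \<in> {..n}" "j' \<in> {..n}" "(unroll \<circ> h) j = (unroll \<circ> h) j'"
  then have "j \<le> n" "j' \<le> n" "int l dvd h j' - h j" "int l dvd h j - h j'"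
    by (auto simp: unroll_eq_iff mod_eq_dvd_iff dvd_diff_commute)
  then show "j = j'" using assms by (cases j j' rule: linorder_cases) auto
qed

lemma unroll_path_edges:
  assumes "h (Suc j) = h j + 1 \<or> h j = h (Suc j) + 1 \<or> (h j = 0 \<and> h (Suc j) = chord_offset)"
  shows "{unroll (h j), unroll (h (Suc j))} \<in> Ed"
  using assms unroll_edge[of "h j"] unroll_edge[of "h (Suc j)"] chord_edge unroll_0 unroll_chord_offset
  by (auto simp: insert_commute)

context
  fixes c :: "'a \<Rightarrow> 'b" and L :: nat
  assumes L_pos: "0 < L" and L_less: "L < l"
    and monochromatic: "\<And>g. inj_on g {..L} \<Longrightarrow> \<forall>j<L. {g j, g (Suc j)} \<in> Ed \<Longrightarrow>
      g ` {..L} \<subseteq> f ` {..<l} \<Longrightarrow> c (g 0) = c (g L)"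
begin

lemma unroll_path_ends:
  assumes "\<And>j. j < L \<Longrightarrow> h (Suc j) = h j + 1 \<or> h j = h (Suc j) + 1 \<or> (h j = 0 \<and> h (Suc j) = chord_offset)"
    and "\<And>j j'. j < j' \<Longrightarrow> j' \<le> L \<Longrightarrow> \<not> int l dvd h j' - h j"
  shows "c (unroll (h 0)) = c (unroll (h L))"
proof -
  have "inj_on (unroll \<circ> h) {..L}" using inj_on_unroll_path assms(2) by blast
  moreover have "\<forall>j<L. {unroll (h j), unroll (h (Suc j))} \<in> Ed" using assms(1) unroll_path_edges by blast
  moreover have "(unroll \<circ> h) ` {..L} \<subseteq> f ` {..<l}" using unroll_in_range by auto
  ultimately show ?thesis using monochromatic[of "unroll \<circ> h"] by simp
qed

lemma is_period_L: "is_period (c \<circ> unroll) (int L)"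
  unfolding is_period_def
proof
  fix s
  have "\<not> int l dvd (s + int j') - (s + int j)" if "j < j'" "j' \<le> L" for j j'
    using that L_less zdvd_not_zless[of "int j' - int j" "int l"] by simp
  then show "(c \<circ> unroll) (s + int L) = (c \<circ> unroll) s"
    using unroll_path_ends[of "\<lambda>j. s + int j"] by simp
qed

text \<open>The path that runs from e1 p back to 0, crosses the chord, and continues L - 1 - p
  steps in direction e2; the last hypothesis says that its two parts do not overlap.\<close>

lemma chord_path_ends:
  fixes e1 e2 :: int
  assumes e1: "e1 = 1 \<or> e1 = -1" and e2: "e2 = 1 \<or> e2 = -1" and "p < L"
    and disjoint: "\<And>x y. 0 \<le> x \<Longrightarrow> x \<le> int p \<Longrightarrow> 0 \<le> y \<Longrightarrow> y \<le> int L - 1 - int p \<Longrightarrow>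
      0 < chord_offset + e2 * y - e1 * x \<and> chord_offset + e2 * y - e1 * x < int l"
  shows "(c \<circ> unroll) (e1 * int p) = (c \<circ> unroll) (chord_offset + e2 * (int L - 1 - int p))"
proof -
  define h where "h j = (if j \<le> p then e1 * (int p - int j)
    else chord_offset + e2 * (int j - int p - 1))" for j
  have "c (unroll (h 0)) = c (unroll (h L))"
  proof (rule unroll_path_ends)
    fix j assume "j < L"
    show "h (Suc j) = h j + 1 \<or> h j = h (Suc j) + 1 \<or> (h j = 0 \<and> h (Suc j) = chord_offset)"
      using e1 e2 unfolding h_def by (cases "j < p") (auto simp: algebra_simps)
  next
    fix j j' :: nat assume "j < j'" "j' \<le> L"
    then have short: "\<not> int l dvd (int j' - int j)"
      using L_less zdvd_not_zless[of "int j' - int j" "int l"] by simp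
    consider "j' \<le> p" | "j \<le> p" "p < j'" | "p < j" by linarith
    then show "\<not> int l dvd h j' - h j"
    proof cases
      case 1
      then have "h j' - h j = - e1 * (int j' - int j)" unfolding h_def using \<open>j < j'\<close> by (simp add: algebra_simps)
      then show ?thesis using short e1 by (auto simp: dvd_diff_commute)
    next
      case 2
      then have "h j' - h j = chord_offset + e2 * (int j' - int p - 1) - e1 * (int p - int j)"
        unfolding h_def by simp
      moreover have "0 < h j' - h j" "h j' - h j < int l"
        using disjoint[of "int p - int j" "int j' - int p - 1"] 2 \<open>j' \<le> L\<close> calculation by simp_all
      ultimately show ?thesis using zdvd_not_zless by metis
    next
      case 3
      then have "h j' - h j = e2 * (int j' - int j)" unfolding h_def using \<open>j < j'\<close> by (simp add: algebra_simps)
      then show ?thesis using short e2 by (auto simp: dvd_diff_commute)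
    qed
  qed
  moreover have "h 0 = e1 * int p" "h L = chord_offset + e2 * (int L - 1 - int p)"
    unfolding h_def using \<open>p < L\<close> by auto
  ultimately show ?thesis by simp
qed

lemma chord_colouring_unroll: "chord_colouring (c \<circ> unroll) (int l) (int L) chord_offset"
proof (unfold_locales)
  show "is_period (c \<circ> unroll) (int l)" by (rule is_period_unroll)
  show "is_period (c \<circ> unroll) (int L)" by (rule is_period_L)
  show "1 \<le> int L" "int L \<le> int l - 1" using L_pos L_less by auto
  show "2 \<le> chord_offset" "chord_offset \<le> int l - 2" by (rule chord_offset_bounds)+
  let ?t = chord_offset and ?L = "int L"
  fix p :: int
  assume "0 \<le> p"
  then have p: "p = int (nat p)" by simp
  note bounds = chord_offset_bounds L_less
  {
    assume "p \<le> ?t - 1" "0 \<le> ?L - 1 - p" "?L - 1 - p \<le> int l - ?t - 1"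
    then have "(c \<circ> unroll) (1 * int (nat p)) = (c \<circ> unroll) (?t + 1 * (?L - 1 - int (nat p)))"
      by (intro chord_path_ends) (use \<open>0 \<le> p\<close> bounds in \<open>auto simp: nat_less_iff\<close>)
    then show "(c \<circ> unroll) p = (c \<circ> unroll) (?t + (?L - 1 - p))" using p by simp
  next
    assume "p \<le> int l - ?t - 1" "0 \<le> ?L - 1 - p" "?L - 1 - p \<le> ?t - 1"
    then have "(c \<circ> unroll) (- 1 * int (nat p)) = (c \<circ> unroll) (?t + - 1 * (?L - 1 - int (nat p)))"
      by (intro chord_path_ends) (use \<open>0 \<le> p\<close> bounds in \<open>auto simp: nat_less_iff\<close>)
    then show "(c \<circ> unroll) (- p) = (c \<circ> unroll) (?t - (?L - 1 - p))"
      using p by (simp add: algebra_simps)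
  next
    assume "?L \<le> ?t" "p \<le> ?L - 1"
    then have "(c \<circ> unroll) (1 * int (nat p)) = (c \<circ> unroll) (?t + - 1 * (?L - 1 - int (nat p)))"
      by (intro chord_path_ends) (use \<open>0 \<le> p\<close> bounds in \<open>auto simp: nat_less_iff\<close>)
    then show "(c \<circ> unroll) p = (c \<circ> unroll) (?t - (?L - 1 - p))"
      using p by (simp add: algebra_simps)
  next
    assume "?L \<le> int l - ?t" "p \<le> ?L - 1"
    then have "(c \<circ> unroll) (- 1 * int (nat p)) = (c \<circ> unroll) (?t + 1 * (?L - 1 - int (nat p)))"
      by (intro chord_path_ends) (use \<open>0 \<le> p\<close> bounds in \<open>auto simp: nat_less_iff\<close>)
    then show "(c \<circ> unroll) (- p) = (c \<circ> unroll) (?t + (?L - 1 - p))" using p by simp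
  }
qed

end

theorem odd_path_with_distinct_end_colours:
  assumes "odd L" "L < l" "u < l" "w < l" "c (f u) \<noteq> c (f w)"
  shows "\<exists>g. inj_on g {..L} \<and> (\<forall>j<L. {g j, g (Suc j)} \<in> Ed) \<and> g ` {..L} \<subseteq> f ` {..<l} \<and>
    c (g 0) \<noteq> c (g L)"
proof (rule ccontr)
  assume "\<not> ?thesis"
  then have "chord_colouring (c \<circ> unroll) (int l) (int L) chord_offset"
    using chord_colouring_unroll[of L c] assms(1,2) by (metis odd_pos)
  then have "is_period (c \<circ> unroll) 2" by (rule chord_colouring.period_two)
  moreover have "is_period (c \<circ> unroll) (int L)" and "odd (int L)"
    using \<open>chord_colouring _ _ _ _\<close> assms(1) by (simp_all add: chord_colouring.period_L)
  ultimately have "(c \<circ> unroll) (int u - int a) = (c \<circ> unroll) (int w - int a)"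
    by (rule constant_if_period_two_and_odd)
  then show False using unroll_of_nat assms(3-5) by simp
qed

end

section \<open>Levels of a breadth-first tree\<close>

lemma tree_dist_le_walk:
  assumes "is_walk ET xs" "hd xs = x" "last xs = v"
  shows "tree_dist ET x v \<le> length xs - 1"
proof -
  have "length xs = Suc (length xs - 1)" using assms(1) unfolding is_walk_def by simp
  then show ?thesis unfolding tree_dist_def using assms by (metis (mono_tags, lifting) Least_le)
qed

lemma shortest_walk:
  assumes "graph_connected VT ET" "x \<in> VT" "v \<in> VT"
  shows "\<exists>xs. is_walk ET xs \<and> hd xs = x \<and> last xs = v \<and> length xs = Suc (tree_dist ET x v)"
proof -
  obtain xs where xs: "is_walk ET xs" "hd xs = x" "last xs = v"
    using assms unfolding graph_connected_def by blast
  then have "length xs = Suc (length xs - 1)" unfolding is_walk_def by simp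
  then have "\<exists>ys. is_walk ET ys \<and> hd ys = x \<and> last ys = v \<and> length ys = Suc (length xs - 1)"
    using xs by metis
  then show ?thesis unfolding tree_dist_def by (rule LeastI)
qed

lemma tree_dist_eq_0:
  assumes "graph_connected VT ET" "x \<in> VT" "v \<in> VT" "tree_dist ET x v = 0"
  shows "v = x"
proof -
  obtain xs where "hd xs = x" "last xs = v" "length xs = 1"
    using shortest_walk[OF assms(1-3)] assms(4) by auto
  then show ?thesis by (metis One_nat_def last_ConsL length_0_conv length_Suc_conv list.sel(1))
qed

lemma is_walk_snoc:
  assumes "is_walk ET xs" "{last xs, v} \<in> ET"
  shows "is_walk ET (xs @ [v])"
proof -
  have "{(xs @ [v]) ! j, (xs @ [v]) ! Suc j} \<in> ET" if "Suc j < length (xs @ [v])" for j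
  proof (cases "Suc j < length xs")
    case True
    then show ?thesis using assms(1) by (simp add: is_walk_def nth_append)
  next
    case False
    then have "j = length xs - 1" "Suc j = length xs" using that by auto
    then show ?thesis using assms by (simp add: is_walk_def nth_append last_conv_nth)
  qed
  then show ?thesis unfolding is_walk_def by simp
qed

lemma tree_dist_Suc_neighbour:
  assumes "graph_connected VT ET" "x \<in> VT" "v \<in> VT"
    and edges: "\<forall>e\<in>ET. \<exists>u v. e = {u, v} \<and> u \<noteq> v \<and> u \<in> VT \<and> v \<in> VT"
    and "tree_dist ET x v = Suc n"
  shows "\<exists>p\<in>VT. {p, v} \<in> ET \<and> tree_dist ET x p = n"
proof -
  obtain xs where xs: "is_walk ET xs" "hd xs = x" "last xs = v" "length xs = Suc (Suc n)"
    using shortest_walk[OF assms(1-3)] assms(5) by auto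
  define p where "p = xs ! n"
  have "xs ! Suc n = v" using xs(3,4) by (metis diff_Suc_1 last_conv_nth list.size(3) nat.distinct(1))
  then have edge: "{p, v} \<in> ET" using xs(1,4) unfolding is_walk_def p_def by force
  then have "p \<in> VT" using edges by (metis doubleton_eq_iff)
  have "tree_dist ET x p \<le> n"
  proof -
    have "is_walk ET (take (Suc n) xs)" using xs(1,4) unfolding is_walk_def by auto
    moreover have "hd (take (Suc n) xs) = x" using xs(2,4) by simp
    moreover have "last (take (Suc n) xs) = p" using xs(4) unfolding p_def by (subst last_conv_nth) auto
    ultimately show ?thesis using tree_dist_le_walk xs(4) by fastforce
  qed
  moreover have "n \<le> tree_dist ET x p"
  proof -
    obtain zs where zs: "is_walk ET zs" "hd zs = x" "last zs = p" "length zs = Suc (tree_dist ET x p)"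
      using shortest_walk[OF assms(1,2) \<open>p \<in> VT\<close>] by blast
    then have "is_walk ET (zs @ [v])" "hd (zs @ [v]) = x"
      using is_walk_snoc[of ET zs v] edge by (auto simp: is_walk_def)
    then have "tree_dist ET x v \<le> length (zs @ [v]) - 1" using tree_dist_le_walk by fastforce
    then show ?thesis using assms(5) zs(4) by simp
  qed
  ultimately show ?thesis using \<open>p \<in> VT\<close> edge by auto
qed

locale rooted_graph =
  fixes VT :: "'a set" and ET :: "'a set set" and x :: 'a
  assumes connected: "graph_connected VT ET"
    and edges: "\<forall>e\<in>ET. \<exists>u v. e = {u, v} \<and> u \<noteq> v \<and> u \<in> VT \<and> v \<in> VT"
    and root: "x \<in> VT"
begin

abbreviation depth :: "'a \<Rightarrow> nat" where
  "depth \<equiv> tree_dist ET x"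

text \<open>For a tree this is its parent function towards x.\<close>

definition parent :: "'a \<Rightarrow> 'a" where
  "parent v = (SOME p. p \<in> VT \<and> {p, v} \<in> ET \<and> depth p = depth v - 1)"

lemma parent_edge:
  assumes "v \<in> VT" "0 < depth v"
  shows "parent v \<in> VT \<and> {parent v, v} \<in> ET \<and> depth (parent v) = depth v - 1"
proof -
  have "depth v = Suc (depth v - 1)" using assms(2) by simp
  then have "\<exists>p. p \<in> VT \<and> {p, v} \<in> ET \<and> depth p = depth v - 1"
    using tree_dist_Suc_neighbour[OF connected root assms(1) edges] by metis
  then show ?thesis unfolding parent_def by (rule someI_ex)
qed

lemma funpow_parent:
  assumes "v \<in> VT" "n \<le> depth v"
  shows "(parent ^^ n) v \<in> VT \<and> depth ((parent ^^ n) v) = depth v - n"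
  using assms(2)
proof (induction n)
  case 0
  then show ?case using assms(1) by simp
next
  case (Suc n)
  then show ?case using parent_edge by simp
qed

definition ancestor :: "'a \<Rightarrow> nat \<Rightarrow> 'a" where
  "ancestor v j = (parent ^^ (depth v - j)) v"

lemma ancestor_in_level:
  assumes "v \<in> VT" "j \<le> depth v"
  shows "ancestor v j \<in> VT \<and> depth (ancestor v j) = j"
  using funpow_parent[OF assms(1), of "depth v - j"] assms(2) unfolding ancestor_def by simp

lemma ancestor_depth [simp]: "ancestor v (depth v) = v"
  unfolding ancestor_def by simp

lemma ancestor_0: "v \<in> VT \<Longrightarrow> ancestor v 0 = x"
  using tree_dist_eq_0[OF connected root] ancestor_in_level[of v 0] by simp

lemma ancestor_eq_below:
  assumes "depth v = depth w" "j' \<le> j" "j \<le> depth v" "ancestor v j = ancestor w j"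
  shows "ancestor v j' = ancestor w j'"
proof -
  have "ancestor z j' = (parent ^^ (j - j')) (ancestor z j)" if "depth z = depth v" for z
  proof -
    have "depth z - j' = (j - j') + (depth z - j)" using assms(2,3) that by simp
    then show ?thesis unfolding ancestor_def by (simp add: funpow_add)
  qed
  then show ?thesis using assms(1,4) by simp
qed

lemma ancestor_edge:
  assumes "v \<in> VT" "j < depth v"
  shows "{ancestor v j, ancestor v (Suc j)} \<in> ET"
proof -
  have "ancestor v (Suc j) \<in> VT" "depth (ancestor v (Suc j)) = Suc j"
    using ancestor_in_level assms by auto
  moreover have "depth v - j = Suc (depth v - Suc j)" using assms(2) by simp
  then have "ancestor v j = parent (ancestor v (Suc j))" unfolding ancestor_def by simp
  ultimately show ?thesis using parent_edge by simp
qed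

lemma exists_branching_level:
  assumes "S \<subseteq> {v \<in> VT. depth v = i}" "u \<in> S" "w \<in> S" "u \<noteq> w"
  shows "\<exists>j<i. (\<forall>u\<in>S. \<forall>w\<in>S. ancestor u j = ancestor w j) \<and>
    (\<exists>u\<in>S. \<exists>w\<in>S. ancestor u (Suc j) \<noteq> ancestor w (Suc j))"
proof -
  define J where "J = {j. j \<le> i \<and> (\<forall>u\<in>S. \<forall>w\<in>S. ancestor u j = ancestor w j)}"
  define j where "j = Max J"
  have "finite J" "0 \<in> J" unfolding J_def using assms(1) ancestor_0 by (auto simp: subset_iff)
  then have "j \<in> J" and j_max: "\<And>j'. j' \<in> J \<Longrightarrow> j' \<le> j"
    unfolding j_def using Max_in Max_ge by blast+
  have "depth u = i" "depth w = i" using assms(1-3) by auto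
  then have "ancestor u i \<noteq> ancestor w i" using assms(4) by (metis ancestor_depth)
  then have "i \<notin> J" using assms(2,3) unfolding J_def by blast
  then have "j < i" using \<open>j \<in> J\<close> unfolding J_def by (auto simp: le_less)
  moreover have "Suc j \<notin> J" using j_max by fastforce
  ultimately show ?thesis using \<open>j \<in> J\<close> unfolding J_def by auto
qed

end

text \<open>A path g with L edges inside level i whose ends u = g 0 and w = g L have the same
  ancestor at depth j but different ancestors at depth j + 1 closes, via the tree paths from w down
  to depth j and from there up to u, into a cycle of length L + 2 (i - j).\<close>

locale level_path = rooted_graph +
  fixes E :: "'a set set" and g :: "nat \<Rightarrow> 'a" and L i j :: nat
  assumes path_inj: "inj_on g {..L}"
    and path_edge: "\<And>n. n < L \<Longrightarrow> {g n, g (Suc n)} \<in> E"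
    and path_level: "\<And>n. n \<le> L \<Longrightarrow> g n \<in> VT \<and> depth (g n) = i"
    and below: "j < i"
    and ends_joined: "ancestor (g 0) j = ancestor (g L) j"
    and ends_split: "ancestor (g 0) (Suc j) \<noteq> ancestor (g L) (Suc j)"
begin

abbreviation height :: nat where
  "height \<equiv> i - j"

abbreviation cycle_length :: nat where
  "cycle_length \<equiv> L + 2 * height"

definition closing_cycle :: "nat \<Rightarrow> 'a" where
  "closing_cycle n =
    (if n \<le> L then g n
     else if n \<le> L + height then ancestor (g L) (i - (n - L))
     else ancestor (g 0) (j + (n - L - height)))"

lemma ends_split_above:
  assumes "j < j'" "j' \<le> i"
  shows "ancestor (g 0) j' \<noteq> ancestor (g L) j'"
  using ancestor_eq_below[of "g 0" "g L" "Suc j" j'] ends_split path_level assms by auto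

lemma closing_cycle_descending:
  assumes "L \<le> n" "n \<le> L + height"
  shows "closing_cycle n = ancestor (g L) (i - (n - L))"
proof (cases "n = L")
  case True
  then show ?thesis using path_level[of L] ancestor_depth[of "g L"] unfolding closing_cycle_def by simp
qed (use assms below in \<open>auto simp: closing_cycle_def\<close>)

lemma closing_cycle_ascending:
  assumes "L + height \<le> n" "n \<le> cycle_length"
  shows "closing_cycle (n mod cycle_length) = ancestor (g 0) (j + (n - L - height))"
proof -
  consider "n = L + height" | "L + height < n" "n < cycle_length" | "n = cycle_length"
    using assms by linarith
  then show ?thesis
  proof cases
    case 1
    then show ?thesis using closing_cycle_descending[of n] ends_joined below by simp
  next
    case 2
    then show ?thesis using below unfolding closing_cycle_def by auto
  next
    case 3
    then have "closing_cycle (n mod cycle_length) = g 0" unfolding closing_cycle_def by simp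
    moreover have "j + (n - L - height) = depth (g 0)" using 3 path_level[of 0] below by simp
    ultimately show ?thesis by (metis ancestor_depth)
  qed
qed

lemma closing_cycle_edge:
  assumes "n < cycle_length"
  shows "{closing_cycle n, closing_cycle (Suc n mod cycle_length)} \<in> E \<union> ET"
proof -
  consider "n < L" | "L \<le> n" "n < L + height" | "L + height \<le> n" by linarith
  then show ?thesis
  proof cases
    case 1
    moreover have "Suc n mod cycle_length = Suc n" using 1 below by simp
    ultimately show ?thesis using path_edge unfolding closing_cycle_def by simp
  next
    case 2
    then have "Suc (i - Suc (n - L)) = i - (n - L)" "i - Suc (n - L) < depth (g L)"
      using path_level[of L] by auto
    then have "{ancestor (g L) (i - Suc (n - L)), ancestor (g L) (i - (n - L))} \<in> ET"
      using ancestor_edge[of "g L" "i - Suc (n - L)"] path_level[of L] by simp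
    moreover have "Suc n mod cycle_length = Suc n" using 2 by simp
    ultimately show ?thesis using 2 closing_cycle_descending[of n] closing_cycle_descending[of "Suc n"]
      by (simp add: Suc_diff_le insert_commute)
  next
    case 3
    have "{ancestor (g 0) (j + (n - L - height)), ancestor (g 0) (Suc (j + (n - L - height)))} \<in> ET"
      using ancestor_edge[of "g 0"] path_level[of 0] assms 3 by simp
    then show ?thesis using 3 assms closing_cycle_ascending[of n] closing_cycle_ascending[of "Suc n"]
      by (simp add: Suc_diff_le)
  qed
qed

lemma depth_closing_cycle_path: "n \<le> L \<Longrightarrow> depth (closing_cycle n) = i"
  using path_level unfolding closing_cycle_def by simp

lemma depth_closing_cycle_descending:
  assumes "L \<le> n" "n \<le> L + height"
  shows "depth (closing_cycle n) = i - (n - L)"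
  using closing_cycle_descending[OF assms] ancestor_in_level[of "g L"] path_level[of L] by simp

lemma depth_closing_cycle_ascending:
  assumes "L + height \<le> n" "n < cycle_length"
  shows "depth (closing_cycle n) = j + (n - L - height)"
  using closing_cycle_ascending[of n] ancestor_in_level[of "g 0"] path_level[of 0] assms by simp

lemma inj_on_closing_cycle: "inj_on closing_cycle {..<cycle_length}"
proof -
  have "closing_cycle n \<noteq> closing_cycle n'" if "n < n'" "n' < cycle_length" for n n'
  proof
    assume eq: "closing_cycle n = closing_cycle n'"
    then have depth_eq: "depth (closing_cycle n) = depth (closing_cycle n')" by simp
    consider (path) "n' \<le> L" | (leave) "n \<le> L" "L < n'" "n' \<le> L + height"
      | (leave_return) "n \<le> L" "L + height < n'" | (descend) "L < n" "n' \<le> L + height"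
      | (turn) "L < n" "n \<le> L + height" "L + height < n'" | (ascend) "L + height < n"
      by linarith
    then show False
    proof cases
      case path
      then show False using eq path_inj that unfolding closing_cycle_def inj_on_def by auto
    next
      case leave
      then show False using depth_eq depth_closing_cycle_path depth_closing_cycle_descending by simp
    next
      case leave_return
      then show False
        using depth_eq depth_closing_cycle_path depth_closing_cycle_ascending that below by simp
    next
      case descend
      then show False using depth_eq depth_closing_cycle_descending that below by simp
    next
      case turn
      define d where "d = j + (n' - L - height)"
      have "j < d" "d \<le> i" unfolding d_def using turn that by auto
      have "depth (closing_cycle n') = d" "depth (closing_cycle n) = i - (n - L)"
        using depth_closing_cycle_ascending[of n'] depth_closing_cycle_descending[of n] turn that
        unfolding d_def by auto
      then have "ancestor (g L) d = ancestor (g 0) d"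
        using eq turn that closing_cycle_descending[of n] closing_cycle_ascending[of n'] depth_eq d_def
        by simp
      then show False using ends_split_above \<open>j < d\<close> \<open>d \<le> i\<close> by metis
    next
      case ascend
      then show False using depth_eq depth_closing_cycle_ascending that by simp
    qed
  qed
  then show ?thesis by (intro inj_onI) (metis lessThan_iff linorder_neqE_nat)
qed

end

lemma (in rooted_graph) odd_cycle_through_theta_in_level:
  assumes theta: "theta_graph E l f a b" and level: "f ` {..<l} \<subseteq> {v \<in> VT. depth v = i}"
    and "i \<le> k" "2 * k \<le> l"
  shows "\<exists>v. inj_on v {..<2 * k + 1} \<and> (\<forall>n<2 * k + 1. {v n, v (Suc n mod (2 * k + 1))} \<in> E \<union> ET)"
proof -
  have "f 0 \<noteq> f 1" using theta_graph.inj_f[OF theta] theta_graph.order[OF theta] by (auto dest: inj_onD)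
  then obtain j u w where "j < i" and joined: "\<forall>u\<in>f ` {..<l}. \<forall>w\<in>f ` {..<l}. ancestor u j = ancestor w j"
    and "u < l" "w < l" and split: "ancestor (f u) (Suc j) \<noteq> ancestor (f w) (Suc j)"
    using exists_branching_level[OF level, of "f 0" "f 1"] theta_graph.order[OF theta] by auto
  define L where "L = 2 * (k - (i - j)) + 1"
  define c where "c z = (ancestor z (Suc j) = ancestor (f u) (Suc j))" for z
  have "odd L" "L < l" using \<open>j < i\<close> assms(3,4) unfolding L_def by auto
  then obtain g where path_inj: "inj_on g {..L}" and path_edge: "\<forall>n<L. {g n, g (Suc n)} \<in> E"
    and g_theta: "g ` {..L} \<subseteq> f ` {..<l}" and colours: "c (g 0) \<noteq> c (g L)"
    using theta_graph.odd_path_with_distinct_end_colours[OF theta, of L u w c] \<open>u < l\<close> \<open>w < l\<close> split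
    unfolding c_def by auto
  have path_level: "g n \<in> VT \<and> depth (g n) = i" if "n \<le> L" for n
  proof -
    have "g n \<in> f ` {..<l}" using that g_theta by auto
    then show ?thesis using level by auto
  qed
  have "g 0 \<in> f ` {..<l}" "g L \<in> f ` {..<l}" using g_theta by auto
  then have "ancestor (g 0) j = ancestor (g L) j" using joined by blast
  moreover have "ancestor (g 0) (Suc j) \<noteq> ancestor (g L) (Suc j)" using colours unfolding c_def by auto
  ultimately interpret level_path VT ET x E g L i j
    using path_inj path_edge path_level \<open>j < i\<close> by unfold_locales simp_all
  have "cycle_length = 2 * k + 1" using \<open>j < i\<close> assms(3) unfolding L_def by simp
  then show ?thesis using inj_on_closing_cycle closing_cycle_edge by metis
qed

section \<open>Berge cycles\<close>

lemma Suc_Suc_mod_neq: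
  assumes "n < m" "3 \<le> m"
  shows "Suc (Suc n mod m) mod m \<noteq> n"
proof -
  have "Suc (Suc n mod m) mod m = (n + 2) mod m" by (simp add: mod_Suc_eq)
  moreover have "(n + 2) mod m \<noteq> n"
    using assms by (cases "n + 2 < m") (auto simp: mod_if)
  ultimately show ?thesis by simp
qed

lemma has_berge_cycle_if_G_pi_cycle:
  assumes "choice_fun H \<pi>" "3 \<le> m" and inj: "inj_on v {..<m}"
    and edge: "\<And>n. n < m \<Longrightarrow> {v n, v (Suc n mod m)} \<in> G_pi H \<pi>"
  shows "has_berge_cycle H m"
proof -
  define Hs where "Hs n = (SOME E. E \<in> H \<and> \<pi> E = {v n, v (Suc n mod m)})" for n
  have Hs: "Hs n \<in> H \<and> \<pi> (Hs n) = {v n, v (Suc n mod m)}" if "n < m" for n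
  proof -
    have "\<exists>E. E \<in> H \<and> \<pi> E = {v n, v (Suc n mod m)}"
      using edge[OF that] unfolding G_pi_def by auto
    then show ?thesis unfolding Hs_def by (rule someI_ex)
  qed
  have "inj_on Hs {..<m}"
  proof (rule inj_onI)
    fix n n' assume "n \<in> {..<m}" "n' \<in> {..<m}" "Hs n = Hs n'"
    then have "n < m" "n' < m" "Suc n mod m < m" "Suc n' mod m < m" by auto
    then have "{v n, v (Suc n mod m)} = {v n', v (Suc n' mod m)}"
      using Hs \<open>Hs n = Hs n'\<close> by metis
    then consider "v n = v n'" | "v n = v (Suc n' mod m)" "v (Suc n mod m) = v n'"
      unfolding doubleton_eq_iff by blast
    then consider "n = n'" | "n = Suc n' mod m" "Suc n mod m = n'"
      using inj_onD[OF inj] \<open>n < m\<close> \<open>n' < m\<close> \<open>Suc n mod m < m\<close> \<open>Suc n' mod m < m\<close>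
      by (metis lessThan_iff)
    then show "n = n'" using Suc_Suc_mod_neq[OF \<open>n' < m\<close> assms(2)] by metis
  qed
  moreover have "{v n, v (Suc n mod m)} \<subseteq> Hs n" if "n < m" for n
    using Hs[OF that] assms(1) unfolding choice_fun_def by force
  ultimately show ?thesis unfolding has_berge_cycle_def
    by (intro exI[of _ Hs] exI[of _ v]) (use Hs inj in auto)
qed

theorem lemma5p2:
  fixes H :: "'a set set" and \<pi> :: "'a set \<Rightarrow> 'a set" and k :: nat
    and VT :: "'a set" and ET :: "'a set set" and x :: 'a
  assumes "k \<ge> 2"
    and "finite H" and "uniform3 H" and "linear_hg H"
    and "\<not> has_berge_cycle H (2 * k + 1)"
    and "choice_fun H \<pi>"
    and "is_subtree VT ET (\<Union>H) (G_pi H \<pi>)"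
    and "x \<in> VT"
  shows "\<forall>i. 1 \<le> i \<and> i \<le> k \<longrightarrow>
           (\<forall>l\<ge>2 * k. \<not> has_theta {v \<in> VT. tree_dist ET x v = i}
                               (induced_edges (G_pi H \<pi>) {v \<in> VT. tree_dist ET x v = i}) l)"
proof (intro allI impI notI)
  fix i l
  let ?level = "{v \<in> VT. tree_dist ET x v = i}"
  assume "1 \<le> i \<and> i \<le> k" "2 * k \<le> l"
    and "has_theta ?level (induced_edges (G_pi H \<pi>) ?level) l"
  then obtain f a b where theta: "theta_graph (induced_edges (G_pi H \<pi>) ?level) l f a b"
    and "f ` {..<l} \<subseteq> ?level"
    unfolding has_theta_def theta_graph_def by blast
  interpret rooted_graph VT ET x using assms(7,8) unfolding is_subtree_def by unfold_locales auto
  obtain v where inj: "inj_on v {..<2 * k + 1}"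
    and cycle: "\<forall>n<2 * k + 1. {v n, v (Suc n mod (2 * k + 1))} \<in> induced_edges (G_pi H \<pi>) ?level \<union> ET"
    using odd_cycle_through_theta_in_level[OF theta] \<open>f ` {..<l} \<subseteq> ?level\<close> \<open>1 \<le> i \<and> i \<le> k\<close>
      \<open>2 * k \<le> l\<close> by blast
  have "induced_edges (G_pi H \<pi>) ?level \<union> ET \<subseteq> G_pi H \<pi>"
    using assms(7) unfolding induced_edges_def is_subtree_def by auto
  then have "\<And>n. n < 2 * k + 1 \<Longrightarrow> {v n, v (Suc n mod (2 * k + 1))} \<in> G_pi H \<pi>"
    using cycle by blast
  moreover have "3 \<le> 2 * k + 1" using assms(1) by simp
  ultimately have "has_berge_cycle H (2 * k + 1)"
    using has_berge_cycle_if_G_pi_cycle[OF assms(6) _ inj] by blast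
  then show False using assms(5) by contradiction
qed

end
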